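(* Let $K$ be a finitely generated field of characteristic $0$, let $\lambda$ be the number of roots of unity contained in $K$, let $\overline{K}$ be an algebraic closure of $K$, and let $$\Gamma:=\{x\in\overline{K}^\times : x^n\in K^\times \text{ for some integer } n>0\}.$$ Let $\alpha_1,\dots,\alpha_s\in\Gamma$ be such that $\alpha_1+\cdots+\alpha_s=1$ and no proper subsum of $\alpha_1+\cdots+\alpha_s$ vanishes. Then there exist roots of unity $\xi_1,\dots,\xi_s\in\overline{K}^\times$ such that $\alpha_i^\lambda\xi_i\in K$ for each $i=1,\dots,s$.
   Context: A proper subsum means $\sum_{i\in I}\alpha_i$ for a nonempty subset $I\subsetneq\{1,\dots,s\}$. *)

theory Defs
  imports "HOL-Algebra.Algebraic_Closure_Type"
begin

definition is_subfield :: "'a::field set \<Rightarrow> bool" where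
  "is_subfield F \<longleftrightarrow> 0 \<in> F \<and> 1 \<in> F \<and>
     (\<forall>x\<in>F. \<forall>y\<in>F. x + y \<in> F \<and> x * y \<in> F) \<and>
     (\<forall>x\<in>F. - x \<in> F \<and> inverse x \<in> F)"

definition finitely_generated_field :: "'a::field itself \<Rightarrow> bool" where
  "finitely_generated_field _ \<longleftrightarrow>
     (\<exists>S :: 'a set. finite S \<and> (\<forall>F. is_subfield F \<and> S \<subseteq> F \<longrightarrow> F = UNIV))"

definition root_of_unity :: "'a::field \<Rightarrow> bool" where
  "root_of_unity x \<longleftrightarrow> (\<exists>n::nat. n > 0 \<and> x ^ n = 1)"

end

theory Submission
  imports Defs
begin

(*
  Choose N with all alpha_i^N in K and a primitive N-th root of unity zeta, and let L = K(zeta).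
  First, every alpha_i lies in L: otherwise some homomorphism t fixing L moves some alpha_j.
  It multiplies each alpha_i by an N-th root of unity eta_i in L, so iterating t gives
  sum_i eta_i^k alpha_i = 1 for all k.  Averaging over k < N shows that the alpha_i with
  eta_i = 1 sum to 1, which is a proper subsum because eta_j <> 1, and then the remaining
  alpha_i form a vanishing proper subsum.
  Second, Kummer theory for the abelian extension L/K: writing t zeta = zeta^(k t) and
  t alpha = zeta^(c t) alpha for the K-homomorphisms t of L, the twists c form a cocycle.
  The N-th roots of unity in K are killed by lambda, so lambda c is a coboundary, i.e.
  alpha^lambda zeta^(-e) is fixed by every t for some e and therefore lies in K.
*)

section \<open>Subrings and polynomials over them\<close>

definition is_subring :: "'a::comm_ring_1 set \<Rightarrow> bool" where
  "is_subring E \<longleftrightarrow> 0 \<in> E \<and> 1 \<in> E \<and> (\<forall>x\<in>E. \<forall>y\<in>E. x + y \<in> E \<and> x * y \<in> E) \<and> (\<forall>x\<in>E. - x \<in> E)"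

lemma is_subring_if_subfield: "is_subfield E \<Longrightarrow> is_subring E"
  unfolding is_subfield_def is_subring_def by auto

lemma
  assumes "is_subring E"
  shows is_subring_0: "0 \<in> E" and is_subring_1: "1 \<in> E"
    and is_subring_add: "x \<in> E \<Longrightarrow> y \<in> E \<Longrightarrow> x + y \<in> E"
    and is_subring_mult: "x \<in> E \<Longrightarrow> y \<in> E \<Longrightarrow> x * y \<in> E"
    and is_subring_uminus: "x \<in> E \<Longrightarrow> - x \<in> E"
  using assms unfolding is_subring_def by auto

lemma is_subring_diff: "is_subring E \<Longrightarrow> x \<in> E \<Longrightarrow> y \<in> E \<Longrightarrow> x - y \<in> E"
  using is_subring_add[of E x "- y"] is_subring_uminus[of E y] by simp

lemma is_subring_power: "is_subring E \<Longrightarrow> x \<in> E \<Longrightarrow> x ^ n \<in> E"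
  by (induction n) (auto intro: is_subring_mult is_subring_1)

lemma is_subring_of_nat: "is_subring E \<Longrightarrow> of_nat n \<in> E"
  by (induction n) (auto intro: is_subring_add is_subring_1 is_subring_0)

lemma is_subring_sum: "is_subring E \<Longrightarrow> (\<And>i. i \<in> A \<Longrightarrow> f i \<in> E) \<Longrightarrow> sum f A \<in> E"
  by (induction A rule: infinite_finite_induct) (auto intro: is_subring_add is_subring_0)

lemma is_subfield_inverse: "is_subfield E \<Longrightarrow> x \<in> E \<Longrightarrow> inverse x \<in> E"
  unfolding is_subfield_def by auto

lemma is_subfieldI: "is_subring E \<Longrightarrow> (\<And>x. x \<in> E \<Longrightarrow> x \<noteq> 0 \<Longrightarrow> inverse x \<in> E) \<Longrightarrow> is_subfield E"
  unfolding is_subring_def is_subfield_def by (metis inverse_zero)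

definition poly_over :: "'a::comm_ring_1 set \<Rightarrow> 'a poly \<Rightarrow> bool" where
  "poly_over E p \<longleftrightarrow> (\<forall>i. coeff p i \<in> E)"

lemma poly_over_0: "is_subring E \<Longrightarrow> poly_over E 0"
  unfolding poly_over_def by (simp add: is_subring_0)

lemma poly_over_pCons: "poly_over E (pCons a p) \<longleftrightarrow> a \<in> E \<and> poly_over E p"
  unfolding poly_over_def by (auto simp: coeff_pCons split: nat.splits)

lemma poly_over_const: "is_subring E \<Longrightarrow> c \<in> E \<Longrightarrow> poly_over E [:c:]"
  by (simp add: poly_over_pCons poly_over_0)

lemma poly_over_1: "is_subring E \<Longrightarrow> poly_over E 1"
  by (simp add: one_pCons poly_over_const is_subring_1)

lemma poly_over_X: "is_subring E \<Longrightarrow> poly_over E [:0, 1:]"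
  by (simp add: poly_over_pCons poly_over_0 is_subring_1 is_subring_0)

lemma poly_over_add: "is_subring E \<Longrightarrow> poly_over E p \<Longrightarrow> poly_over E q \<Longrightarrow> poly_over E (p + q)"
  unfolding poly_over_def by (auto intro: is_subring_add)

lemma poly_over_uminus: "is_subring E \<Longrightarrow> poly_over E p \<Longrightarrow> poly_over E (- p)"
  unfolding poly_over_def by (auto intro: is_subring_uminus)

lemma poly_over_diff: "is_subring E \<Longrightarrow> poly_over E p \<Longrightarrow> poly_over E q \<Longrightarrow> poly_over E (p - q)"
  unfolding poly_over_def by (auto intro: is_subring_diff)

lemma poly_over_smult: "is_subring E \<Longrightarrow> c \<in> E \<Longrightarrow> poly_over E p \<Longrightarrow> poly_over E (smult c p)"
  unfolding poly_over_def by (auto intro: is_subring_mult)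

lemma poly_over_monom: "is_subring E \<Longrightarrow> c \<in> E \<Longrightarrow> poly_over E (monom c n)"
  unfolding poly_over_def by (auto intro: is_subring_0)

lemma poly_over_mult: "is_subring E \<Longrightarrow> poly_over E p \<Longrightarrow> poly_over E q \<Longrightarrow> poly_over E (p * q)"
  unfolding poly_over_def coeff_mult by (auto intro!: is_subring_sum is_subring_mult)

lemma poly_over_pderiv: "is_subring E \<Longrightarrow> poly_over E p \<Longrightarrow> poly_over E (pderiv p)"
  unfolding poly_over_def coeff_pderiv by (metis is_subring_mult is_subring_of_nat)

lemma poly_over_mono: "poly_over E p \<Longrightarrow> E \<subseteq> F \<Longrightarrow> poly_over F p"
  unfolding poly_over_def by auto

lemma poly_in_subring: "is_subring E \<Longrightarrow> poly_over E p \<Longrightarrow> y \<in> E \<Longrightarrow> poly p y \<in> E"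
  by (induction p) (auto simp: poly_over_pCons intro: is_subring_add is_subring_mult is_subring_0)

lemma poly_over_divmod_monic:
  fixes p :: "'a::idom poly"
  assumes E: "is_subring E" and p: "poly_over E p" "lead_coeff p = 1" and f: "poly_over E f"
  shows "\<exists>q r. poly_over E q \<and> poly_over E r \<and> f = q * p + r \<and> (r = 0 \<or> degree r < degree p)"
  using f
proof (induction "degree f" arbitrary: f rule: less_induct)
  case less
  show ?case
  proof (cases "f = 0 \<or> degree f < degree p")
    case True
    then show ?thesis using less.prems E by (intro exI[of _ 0] exI[of _ f]) (auto simp: poly_over_0)
  next
    case False
    hence f0: "f \<noteq> 0" and dg: "degree p \<le> degree f" by auto
    define c where "c = lead_coeff f"
    have c: "c \<noteq> 0" "c \<in> E" using f0 less.prems by (auto simp: c_def poly_over_def)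
    have p0: "p \<noteq> 0" using p(2) by auto
    define m where "m = monom c (degree f - degree p)"
    have m: "poly_over E m" unfolding m_def using E c(2) by (rule poly_over_monom)
    define f' where "f' = f - m * p"
    have dm: "degree (m * p) = degree f"
      using c p0 dg by (simp add: m_def degree_mult_eq degree_monom_eq[OF c(1)])
    have lm: "lead_coeff (m * p) = c"
      using p(2) by (simp add: m_def lead_coeff_mult degree_monom_eq[OF c(1)])
    have f': "poly_over E f'"
      unfolding f'_def using E less.prems m p by (intro poly_over_diff poly_over_mult)
    have "degree f' \<le> degree f" unfolding f'_def using dm by (intro degree_diff_le) auto
    moreover have "coeff f' (degree f) = 0"
      unfolding f'_def using lm dm c_def by simp
    ultimately have "f' = 0 \<or> degree f' < degree f"
      by (metis le_antisym le_degree not_le leading_coeff_0_iff)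
    then obtain q r where qr: "poly_over E q" "poly_over E r" "f' = q * p + r"
      "r = 0 \<or> degree r < degree p"
    proof
      assume "f' = 0"
      then show ?thesis using that[of 0 0] E by (simp add: poly_over_0)
    next
      assume "degree f' < degree f"
      from less.hyps[OF this f'] show ?thesis using that by blast
    qed
    have "f = (q + m) * p + r" using qr(3) unfolding f'_def by (simp add: algebra_simps)
    moreover have "poly_over E (q + m)" using E qr(1) m by (rule poly_over_add)
    ultimately show ?thesis using qr(2,4) by blast
  qed
qed

section \<open>Simple extensions and minimal polynomials\<close>

definition adjoin :: "'a::comm_ring_1 set \<Rightarrow> 'a \<Rightarrow> 'a set" where
  "adjoin E g = {poly p g | p. poly_over E p}"

lemma is_subring_adjoin:
  assumes E: "is_subring E"
  shows "is_subring (adjoin E g)"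
  unfolding is_subring_def adjoin_def
proof (intro conjI ballI)
  show "0 \<in> {poly p g |p. poly_over E p}" using E by (auto intro!: exI[of _ 0] poly_over_0)
  show "1 \<in> {poly p g |p. poly_over E p}" using E by (auto intro!: exI[of _ 1] poly_over_1)
  fix x y assume "x \<in> {poly p g |p. poly_over E p}" "y \<in> {poly p g |p. poly_over E p}"
  then obtain p q where pq: "poly_over E p" "poly_over E q" "x = poly p g" "y = poly q g" by blast
  show "x + y \<in> {poly p g |p. poly_over E p}"
    using pq E by (auto intro!: exI[of _ "p + q"] poly_over_add)
  show "x * y \<in> {poly p g |p. poly_over E p}"
    using pq E by (auto intro!: exI[of _ "p * q"] poly_over_mult)
  show "- x \<in> {poly p g |p. poly_over E p}"
    using pq E by (auto intro!: exI[of _ "- p"] poly_over_uminus)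
qed

lemma subset_adjoin: "is_subring E \<Longrightarrow> E \<subseteq> adjoin E g"
  unfolding adjoin_def by (force intro: poly_over_const)

lemma mem_adjoin_self: "is_subring E \<Longrightarrow> g \<in> adjoin E g"
  unfolding adjoin_def by (force intro: poly_over_X)

lemma adjoin_mono: "E \<subseteq> F \<Longrightarrow> adjoin E g \<subseteq> adjoin F g"
  unfolding adjoin_def using poly_over_mono by blast

definition algebraic_over :: "'a::comm_ring_1 set \<Rightarrow> bool" where
  "algebraic_over E \<longleftrightarrow> (\<forall>y. \<exists>p. p \<noteq> 0 \<and> poly_over E p \<and> poly p y = 0)"

lemma algebraic_over_mono: "algebraic_over E \<Longrightarrow> E \<subseteq> F \<Longrightarrow> algebraic_over F"
  unfolding algebraic_over_def using poly_over_mono by blast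

lemma algebraic_over_poly_coeff_0_nonzero:
  fixes y :: "'a::idom"
  assumes "algebraic_over E" "y \<noteq> 0"
  shows "\<exists>p. poly_over E p \<and> poly p y = 0 \<and> coeff p 0 \<noteq> 0"
proof -
  have "\<exists>p. poly_over E p \<and> poly p y = 0 \<and> coeff p 0 \<noteq> 0"
    if "p \<noteq> 0" "poly_over E p" "poly p y = 0" for p
    using that
  proof (induction "degree p" arbitrary: p rule: less_induct)
    case (less p)
    show ?case
    proof (cases "coeff p 0 = 0")
      case True
      obtain p' where p: "p = pCons 0 p'" using True by (cases p) auto
      have "p' \<noteq> 0" using less.prems p by auto
      moreover have "poly_over E p'" "poly p' y = 0"
        using less.prems p assms(2) by (auto simp: poly_over_pCons)
      ultimately show ?thesis using less.hyps p by fastforce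
    qed (use less.prems in blast)
  qed
  then show ?thesis using assms(1) unfolding algebraic_over_def by blast
qed

lemma is_subfield_adjoin:
  assumes E: "is_subfield E" and alg: "algebraic_over E"
  shows "is_subfield (adjoin E g)"
proof (rule is_subfieldI)
  have sr: "is_subring E" using E by (rule is_subring_if_subfield)
  show sa: "is_subring (adjoin E g)" using sr by (rule is_subring_adjoin)
  fix y assume y: "y \<in> adjoin E g" "y \<noteq> 0"
  obtain p where p: "poly_over E p" "poly p y = 0" "coeff p 0 \<noteq> 0"
    using algebraic_over_poly_coeff_0_nonzero[OF alg y(2)] by blast
  obtain c p' where pp: "p = pCons c p'" by (cases p)
  have c: "c \<in> E" "c \<noteq> 0" and p': "poly_over E p'"
    using p(1,3) unfolding pp poly_over_pCons by auto
  have "y * poly p' y = - c" using p(2) unfolding pp by (simp add: eq_neg_iff_add_eq_0 add.commute)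
  then have "y * (- poly p' y * inverse c) = 1" using c(2) by (simp add: mult.assoc[symmetric])
  then have "inverse y = - poly p' y * inverse c" by (rule inverse_unique)
  moreover have "poly p' y \<in> adjoin E g"
    using poly_in_subring[OF sa poly_over_mono[OF p' subset_adjoin[OF sr]] y(1)] .
  moreover have "inverse c \<in> adjoin E g"
    using is_subfield_inverse[OF E c(1)] subset_adjoin[OF sr] by blast
  ultimately show "inverse y \<in> adjoin E g" using sa by (simp add: is_subring_mult is_subring_uminus)
qed

definition min_poly :: "'a::field set \<Rightarrow> 'a \<Rightarrow> 'a poly" where
  "min_poly E g = (SOME p. poly_over E p \<and> lead_coeff p = 1 \<and> poly p g = 0 \<and>
     (\<forall>q. q \<noteq> 0 \<and> poly_over E q \<and> poly q g = 0 \<longrightarrow> degree p \<le> degree q))"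

context
  fixes E :: "'a::field set"
  assumes subfield: "is_subfield E" and alg: "algebraic_over E"
begin

lemma min_poly_exists:
  "\<exists>p. poly_over E p \<and> lead_coeff p = 1 \<and> poly p g = 0 \<and>
     (\<forall>q. q \<noteq> 0 \<and> poly_over E q \<and> poly q g = 0 \<longrightarrow> degree p \<le> degree q)"
proof -
  obtain q0 where "q0 \<noteq> 0 \<and> poly_over E q0 \<and> poly q0 g = 0"
    using alg unfolding algebraic_over_def by blast
  from ex_has_least_nat[of "\<lambda>q. q \<noteq> 0 \<and> poly_over E q \<and> poly q g = 0", OF this, of degree]
  obtain q where q: "q \<noteq> 0" "poly_over E q" "poly q g = 0"
    and min: "\<forall>r. r \<noteq> 0 \<and> poly_over E r \<and> poly r g = 0 \<longrightarrow> degree q \<le> degree r" by blast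
  have l: "lead_coeff q \<in> E" "lead_coeff q \<noteq> 0" using q poly_over_def by auto
  define p where "p = smult (inverse (lead_coeff q)) q"
  have "poly_over E p"
    unfolding p_def using subfield l q
    by (intro poly_over_smult is_subring_if_subfield is_subfield_inverse)
  moreover have "lead_coeff p = 1" "poly p g = 0" "degree p = degree q"
    using l q unfolding p_def by (simp_all add: lead_coeff_smult)
  ultimately show ?thesis using min by (intro exI[of _ p]) simp
qed

lemma
  shows poly_over_min_poly: "poly_over E (min_poly E g)"
    and lead_coeff_min_poly: "lead_coeff (min_poly E g) = 1"
    and min_poly_root: "poly (min_poly E g) g = 0"
    and degree_min_poly_le:
      "q \<noteq> 0 \<Longrightarrow> poly_over E q \<Longrightarrow> poly q g = 0 \<Longrightarrow> degree (min_poly E g) \<le> degree q"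
  using someI_ex[OF min_poly_exists[of g]] unfolding min_poly_def[symmetric] by blast+

lemma degree_min_poly_pos: "degree (min_poly E g) > 0"
proof (rule ccontr)
  assume "\<not> ?thesis"
  then have "min_poly E g = [:lead_coeff (min_poly E g):]" by (metis degree_0_id not_gr0)
  then have "min_poly E g = 1" using lead_coeff_min_poly by (simp add: one_pCons)
  then show False using min_poly_root[of g] by simp
qed

lemma min_poly_dvd:
  assumes f: "poly_over E f" "poly f g = 0"
  shows "\<exists>q. poly_over E q \<and> f = q * min_poly E g"
proof -
  obtain q r where qr: "poly_over E q" "poly_over E r" "f = q * min_poly E g + r"
      "r = 0 \<or> degree r < degree (min_poly E g)"
    using poly_over_divmod_monic[OF is_subring_if_subfield[OF subfield]
        poly_over_min_poly lead_coeff_min_poly f(1)] by blast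
  have "poly r g = 0" using qr(3) f(2) min_poly_root[of g] by simp
  then have "r = 0" using qr(2,4) degree_min_poly_le[of r g] by fastforce
  then show ?thesis using qr by auto
qed

end

section \<open>Homomorphisms defined on a subfield\<close>

definition ring_hom_on :: "'a::comm_ring_1 set \<Rightarrow> ('a \<Rightarrow> 'a) \<Rightarrow> bool" where
  "ring_hom_on E t \<longleftrightarrow> t 1 = 1 \<and> (\<forall>x\<in>E. \<forall>y\<in>E. t (x + y) = t x + t y \<and> t (x * y) = t x * t y)"

lemma ring_hom_on_id: "ring_hom_on E (\<lambda>x. x)"
  unfolding ring_hom_on_def by simp

lemma ring_hom_on_subset: "ring_hom_on F t \<Longrightarrow> E \<subseteq> F \<Longrightarrow> ring_hom_on E t"
  unfolding ring_hom_on_def by blast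

context
  fixes E :: "'a::field set" and t :: "'a \<Rightarrow> 'a"
  assumes subfield: "is_subfield E" and hom: "ring_hom_on E t"
begin

lemma
  shows ring_hom_on_1: "t 1 = 1"
    and ring_hom_on_add: "x \<in> E \<Longrightarrow> y \<in> E \<Longrightarrow> t (x + y) = t x + t y"
    and ring_hom_on_mult: "x \<in> E \<Longrightarrow> y \<in> E \<Longrightarrow> t (x * y) = t x * t y"
  using hom unfolding ring_hom_on_def by blast+

private lemma subring: "is_subring E"
  using subfield by (rule is_subring_if_subfield)

lemma ring_hom_on_0: "t 0 = 0"
  using ring_hom_on_add[of 0 0] is_subring_0[OF subring] by (metis add.right_neutral add_left_cancel)

lemma ring_hom_on_uminus: "x \<in> E \<Longrightarrow> t (- x) = - t x"
  using ring_hom_on_add[of x "- x"] is_subring_uminus[OF subring] ring_hom_on_0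
  by (metis add.right_inverse minus_unique)

lemma ring_hom_on_diff: "x \<in> E \<Longrightarrow> y \<in> E \<Longrightarrow> t (x - y) = t x - t y"
  using ring_hom_on_add[of x "- y"] ring_hom_on_uminus[of y] is_subring_uminus[OF subring] by simp

lemma ring_hom_on_eq_0_iff:
  assumes x: "x \<in> E"
  shows "t x = 0 \<longleftrightarrow> x = 0"
proof
  assume "t x = 0"
  then have "t (x * inverse x) = 0"
    using ring_hom_on_mult[OF x is_subfield_inverse[OF subfield x]] by simp
  then show "x = 0" using ring_hom_on_1 by (metis one_neq_zero right_inverse)
qed (simp add: ring_hom_on_0)

lemma ring_hom_on_sum: "(\<And>i. i \<in> A \<Longrightarrow> f i \<in> E) \<Longrightarrow> t (sum f A) = (\<Sum>i\<in>A. t (f i))"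
proof (induction A rule: infinite_finite_induct)
  case (insert a A)
  then show ?case using ring_hom_on_add[of "f a" "sum f A"] is_subring_sum[OF subring, of A f] by simp
qed (auto simp: ring_hom_on_0)

lemma ring_hom_on_power: "x \<in> E \<Longrightarrow> t (x ^ n) = t x ^ n"
  by (induction n) (auto simp: ring_hom_on_1 ring_hom_on_mult is_subring_power[OF subring])

lemma map_poly_ring_hom_on_diff:
  "poly_over E p \<Longrightarrow> poly_over E q \<Longrightarrow> map_poly t (p - q) = map_poly t p - map_poly t q"
  by (rule poly_eqI) (auto simp: coeff_map_poly ring_hom_on_0 ring_hom_on_diff poly_over_def)

lemma map_poly_ring_hom_on_add:
  "poly_over E p \<Longrightarrow> poly_over E q \<Longrightarrow> map_poly t (p + q) = map_poly t p + map_poly t q"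
  by (rule poly_eqI) (auto simp: coeff_map_poly ring_hom_on_0 ring_hom_on_add poly_over_def)

lemma map_poly_ring_hom_on_mult:
  "poly_over E p \<Longrightarrow> poly_over E q \<Longrightarrow> map_poly t (p * q) = map_poly t p * map_poly t q"
  by (rule poly_eqI)
    (auto simp: coeff_map_poly ring_hom_on_0 ring_hom_on_mult poly_over_def coeff_mult
      ring_hom_on_sum is_subring_mult[OF subring])

lemma ring_hom_on_poly: "poly_over E p \<Longrightarrow> y \<in> E \<Longrightarrow> t (poly p y) = poly (map_poly t p) (t y)"
proof (induction p)
  case (pCons a p)
  then have "a \<in> E" "poly_over E p" using poly_over_pCons by auto
  then show ?case
    using pCons poly_in_subring[OF subring]
    by (simp add: map_poly_pCons ring_hom_on_0 ring_hom_on_add ring_hom_on_mult is_subring_mult[OF subring])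
qed (simp add: ring_hom_on_0)

lemma degree_map_poly_ring_hom_on: "poly_over E p \<Longrightarrow> degree (map_poly t p) = degree p"
  by (cases "p = 0") (auto intro!: map_poly_degree_eq simp: ring_hom_on_eq_0_iff poly_over_def)

end

lemma ring_hom_on_poly_eval_cong:
  assumes E: "is_subfield E" and alg: "algebraic_over E" and hom: "ring_hom_on E t"
    and root: "poly (map_poly t (min_poly E g)) g' = 0"
    and f: "poly_over E f1" "poly_over E f2" "poly f1 g = poly f2 g"
  shows "poly (map_poly t f1) g' = poly (map_poly t f2) g'"
proof -
  obtain q where q: "poly_over E q" "f1 - f2 = q * min_poly E g"
    using min_poly_dvd[OF E alg, of "f1 - f2" g] f poly_over_diff[OF is_subring_if_subfield[OF E]] by auto
  have "map_poly t (f1 - f2) = map_poly t q * map_poly t (min_poly E g)"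
    using q map_poly_ring_hom_on_mult[OF E hom] poly_over_min_poly[OF E alg] by metis
  then have "poly (map_poly t f1 - map_poly t f2) g' = 0"
    using root map_poly_ring_hom_on_diff[OF E hom f(1,2)] by simp
  then show ?thesis by simp
qed

lemma ring_hom_on_extend_adjoin:
  assumes E: "is_subfield E" and alg: "algebraic_over E" and hom: "ring_hom_on E t"
    and root: "poly (map_poly t (min_poly E g)) g' = 0"
  shows "\<exists>t'. ring_hom_on (adjoin E g) t' \<and> (\<forall>x\<in>E. t' x = t x) \<and> t' g = g'"
proof -
  have sr: "is_subring E" using E by (rule is_subring_if_subfield)
  define t' where "t' y = poly (map_poly t (SOME f. poly_over E f \<and> poly f g = y)) g'" for y
  have t'_poly: "t' (poly f g) = poly (map_poly t f) g'" if f: "poly_over E f" for f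
  proof -
    have "\<exists>f'. poly_over E f' \<and> poly f' g = poly f g" using f by blast
    from someI_ex[OF this] show ?thesis
      unfolding t'_def using ring_hom_on_poly_eval_cong[OF E alg hom root] f by blast
  qed
  have "ring_hom_on (adjoin E g) t'"
    unfolding ring_hom_on_def
  proof (intro conjI ballI)
    show "t' 1 = 1"
      using t'_poly[OF poly_over_1[OF sr]] ring_hom_on_1[OF E hom] by simp
    fix x y assume "x \<in> adjoin E g" "y \<in> adjoin E g"
    then obtain f1 f2 where f: "poly_over E f1" "poly_over E f2" "x = poly f1 g" "y = poly f2 g"
      unfolding adjoin_def by blast
    show "t' (x + y) = t' x + t' y"
      using t'_poly[OF poly_over_add[OF sr f(1,2)]] map_poly_ring_hom_on_add[OF E hom f(1,2)]
        t'_poly f by simp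
    show "t' (x * y) = t' x * t' y"
      using t'_poly[OF poly_over_mult[OF sr f(1,2)]] map_poly_ring_hom_on_mult[OF E hom f(1,2)]
        t'_poly f by simp
  qed
  moreover have "t' x = t x" if "x \<in> E" for x
    using t'_poly[OF poly_over_const[OF sr that]] ring_hom_on_0[OF E hom] by (simp add: map_poly_pCons)
  moreover have "t' g = g'"
    using t'_poly[OF poly_over_X[OF sr]] ring_hom_on_0[OF E hom] ring_hom_on_1[OF E hom]
    by (simp add: map_poly_pCons)
  ultimately show ?thesis by blast
qed

fun adjoin_list :: "'a::comm_ring_1 set \<Rightarrow> 'a list \<Rightarrow> 'a set" where
  "adjoin_list E [] = E"
| "adjoin_list E (g # gs) = adjoin_list (adjoin E g) gs"

lemma adjoin_list_subfield:
  assumes "is_subfield E" "algebraic_over E"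
  shows "is_subfield (adjoin_list E gs) \<and> E \<subseteq> adjoin_list E gs \<and> set gs \<subseteq> adjoin_list E gs"
  using assms
proof (induction gs arbitrary: E)
  case (Cons g gs)
  have "is_subfield (adjoin E g)" "algebraic_over (adjoin E g)" "E \<subseteq> adjoin E g" "g \<in> adjoin E g"
    using Cons.prems is_subfield_adjoin algebraic_over_mono subset_adjoin mem_adjoin_self
      is_subring_if_subfield by blast+
  then show ?case using Cons.IH[of "adjoin E g"] by auto
qed simp

lemma ring_hom_on_extend_adjoin_list:
  fixes E :: "'a::alg_closed_field set"
  assumes "is_subfield E" "algebraic_over E" "ring_hom_on E t"
  shows "\<exists>t'. ring_hom_on (adjoin_list E gs) t' \<and> (\<forall>x\<in>E. t' x = t x)"
  using assms
proof (induction gs arbitrary: E t)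
  case (Cons g gs)
  have "degree (map_poly t (min_poly E g)) > 0"
    using Cons.prems degree_map_poly_ring_hom_on poly_over_min_poly degree_min_poly_pos by metis
  then obtain g' where "poly (map_poly t (min_poly E g)) g' = 0"
    using alg_closed_imp_poly_has_root by blast
  then obtain t1 where t1: "ring_hom_on (adjoin E g) t1" "\<forall>x\<in>E. t1 x = t x"
    using ring_hom_on_extend_adjoin Cons.prems by blast
  have "is_subfield (adjoin E g)" "algebraic_over (adjoin E g)" "E \<subseteq> adjoin E g"
    using Cons.prems is_subfield_adjoin algebraic_over_mono subset_adjoin is_subring_if_subfield
    by blast+
  with Cons.IH[OF _ _ t1(1)] t1(2) show ?case by fastforce
qed auto

lemma min_poly_other_root:
  fixes E :: "'a::{alg_closed_field,field_char_0} set"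
  assumes E: "is_subfield E" and alg: "algebraic_over E" and x: "x \<notin> E"
  shows "\<exists>x'. x' \<noteq> x \<and> poly (min_poly E x) x' = 0"
proof -
  define p where "p = min_poly E x"
  have p: "poly_over E p" "lead_coeff p = 1" "poly p x = 0"
    "\<And>q. q \<noteq> 0 \<Longrightarrow> poly_over E q \<Longrightarrow> poly q x = 0 \<Longrightarrow> degree p \<le> degree q"
    unfolding p_def using poly_over_min_poly lead_coeff_min_poly min_poly_root degree_min_poly_le
      E alg by blast+
  have "degree p \<noteq> 1"
  proof
    assume "degree p = 1"
    then have "x = - coeff p 0"
      using p(2,3) by (simp add: poly_altdef eq_neg_iff_add_eq_0 add.commute)
    then show False using x p(1) is_subring_uminus[OF is_subring_if_subfield[OF E]] poly_over_def
      by metis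
  qed
  then have deg: "degree p \<ge> 2" using degree_min_poly_pos[OF E alg, of x] unfolding p_def by linarith
  \<comment> \<open>In characteristic 0, \<open>pderiv p \<noteq> 0\<close> and the minimality of \<open>p\<close> make \<open>x\<close> a simple root.\<close>
  have "pderiv p \<noteq> 0" using deg pderiv_eq_0_iff[of p] by simp
  then have "poly (pderiv p) x \<noteq> 0"
    using p(4)[OF _ poly_over_pderiv[OF is_subring_if_subfield[OF E] p(1)]] degree_pderiv[of p] deg
    by fastforce
  moreover obtain q where q: "p = [:-x, 1:] * q" using p(3) poly_eq_0_iff_dvd by (metis dvdE)
  moreover have "pderiv ([:-x, 1:] * q) = [:-x, 1:] * pderiv q + q"
    by (subst pderiv_mult) (simp add: pderiv_pCons)
  ultimately have qx: "poly q x \<noteq> 0" by simp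
  then have "degree q = degree p - 1" using q degree_mult_eq[of "[:-x, 1:]" q] by fastforce
  then obtain x' where "poly q x' = 0"
    using deg alg_closed_imp_poly_has_root[of q] by fastforce
  moreover have "x' \<noteq> x" using qx calculation by auto
  ultimately show ?thesis using q unfolding p_def by auto
qed

lemma exists_ring_hom_moving:
  fixes E :: "'a::{alg_closed_field,field_char_0} set"
  assumes E: "is_subfield E" and alg: "algebraic_over E" and x: "x \<notin> E"
  shows "\<exists>t. ring_hom_on (adjoin_list E (x # gs)) t \<and> (\<forall>y\<in>E. t y = y) \<and> t x \<noteq> x"
proof -
  obtain x' where x': "x' \<noteq> x" "poly (min_poly E x) x' = 0"
    using min_poly_other_root[OF assms] by blast
  then obtain t0 where t0: "ring_hom_on (adjoin E x) t0" "\<forall>y\<in>E. t0 y = y" "t0 x = x'"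
    using ring_hom_on_extend_adjoin[OF E alg ring_hom_on_id, of x x'] by auto
  have "is_subfield (adjoin E x)" "algebraic_over (adjoin E x)" "E \<subseteq> adjoin E x" "x \<in> adjoin E x"
    using E alg is_subfield_adjoin algebraic_over_mono subset_adjoin mem_adjoin_self
      is_subring_if_subfield by blast+
  with ring_hom_on_extend_adjoin_list[OF _ _ t0(1)] t0(2,3) x'(1) show ?thesis by fastforce
qed

section \<open>Primitive roots of unity\<close>

definition primitive_root :: "nat \<Rightarrow> 'a::comm_ring_1 \<Rightarrow> bool" where
  "primitive_root n z \<longleftrightarrow> (\<forall>k. z ^ k = 1 \<longleftrightarrow> n dvd k)"

lemma primitive_root_power_eq_1_iff: "primitive_root n z \<Longrightarrow> z ^ k = 1 \<longleftrightarrow> n dvd k"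
  unfolding primitive_root_def by blast

lemma power_gcd_eq_1:
  fixes z :: "'a::monoid_mult"
  assumes "z ^ a = 1" "z ^ b = 1"
  shows "z ^ gcd a b = 1"
proof (cases "a = 0")
  case False
  then obtain x y where xy: "a * x = b * y + gcd a b" using bezout_nat by blast
  have "1 = z ^ (a * x)" using assms by (simp add: power_mult)
  also have "\<dots> = z ^ gcd a b" using xy assms by (simp add: power_add power_mult)
  finally show ?thesis by simp
qed (use assms in simp)

lemma degree_monom_minus_const:
  assumes "m > 0"
  shows "degree (monom (1::'a::field) m - [:c:]) = m"
proof -
  have "monom (1::'a) m - [:c:] = monom 1 m + [:- c:]" by simp
  also have "degree \<dots> = m" using assms by (subst degree_add_eq_left) (simp_all add: degree_monom_eq)
  finally show ?thesis .
qed

lemma exists_root_of_monom_minus_const: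
  "m > 0 \<Longrightarrow> \<exists>y::'a::alg_closed_field. y ^ m = c"
  using alg_closed_imp_poly_has_root[of "monom 1 m - [:c:]"] degree_monom_minus_const[of m c]
  by (auto simp: poly_monom)

lemma primitive_root_prime_power_exists:
  assumes p: "prime p" and a: "a \<ge> 1"
  shows "\<exists>y::'a::{alg_closed_field,field_char_0}. primitive_root (p ^ a) y"
proof -
  have p2: "p \<ge> 2" using p prime_ge_2_nat by blast
  define Psi :: "'a poly" where "Psi = (\<Sum>j<p. monom 1 j)"
  have "coeff Psi (p - 1) = 1"
    unfolding Psi_def coeff_sum using p2 by (simp add: coeff_monom)
  then have "degree Psi > 0" using le_degree[of Psi "p - 1"] p2 by simp
  then obtain z where "poly Psi z = 0" using alg_closed_imp_poly_has_root by blast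
  then have zs: "(\<Sum>j<p. z ^ j) = 0" unfolding Psi_def by (simp add: poly_sum poly_monom)
  then have z1: "z \<noteq> 1" using p2 by auto
  then have zp: "z ^ p = 1" using zs sum_gp_strict[of z p] by simp
  define m where "m = p ^ (a - 1)"
  obtain y :: 'a where ym: "y ^ m = z"
    using exists_root_of_monom_minus_const[of m z] p2 unfolding m_def by auto
  have pa: "p ^ a = m * p" unfolding m_def using a by (cases a) (auto simp: power_Suc2)
  have y1: "y ^ (p ^ a) = 1" using pa ym zp by (simp add: power_mult)
  have "p ^ a dvd k" if yk: "y ^ k = 1" for k
  proof -
    obtain i where i: "i \<le> a" "gcd k (p ^ a) = p ^ i"
      using divides_primepow_nat[OF p, of "gcd k (p ^ a)" a] by auto
    then have yi: "y ^ (p ^ i) = 1" using power_gcd_eq_1[OF yk y1] by simp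
    have "i = a"
    proof (rule ccontr)
      assume "i \<noteq> a"
      then have "p ^ i dvd m" unfolding m_def using i(1) by (simp add: le_imp_power_dvd)
      then have "y ^ m = 1" using yi by (auto simp: power_mult elim!: dvdE)
      then show False using ym z1 by simp
    qed
    then show ?thesis using i by (metis gcd_dvd1)
  qed
  moreover have "y ^ k = 1" if "p ^ a dvd k" for k
    using that y1 by (auto simp: power_mult elim!: dvdE)
  ultimately show ?thesis unfolding primitive_root_def by blast
qed

lemma primitive_root_mult:
  fixes x y :: "'a::comm_ring_1"
  assumes px: "primitive_root a x" and py: "primitive_root b y" and ab: "coprime a b"
  shows "primitive_root (a * b) (x * y)"
proof -
  note X = primitive_root_power_eq_1_iff[OF px] and Y = primitive_root_power_eq_1_iff[OF py]
  have "a * b dvd k" if k: "(x * y) ^ k = 1" for k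
  proof -
    have "(x * y) ^ (k * a) = 1" "(x * y) ^ (k * b) = 1" using k by (simp_all add: power_mult)
    moreover have "x ^ (k * a) = 1" "y ^ (k * b) = 1" using X Y by simp_all
    ultimately have "y ^ (k * a) = 1" "x ^ (k * b) = 1" by (simp_all add: power_mult_distrib)
    then have "b dvd k * a" "a dvd k * b" using X Y by simp_all
    then have "b dvd k" "a dvd k"
      using ab coprime_commute[of a b] coprime_dvd_mult_left_iff by blast+
    then show ?thesis using ab by (simp add: divides_mult)
  qed
  moreover have "(x * y) ^ k = 1" if "a * b dvd k" for k
  proof -
    have "x ^ k = 1" "y ^ k = 1" using that X Y dvd_mult_left[of a b k] dvd_mult_right[of a b k] by auto
    then show ?thesis by (simp add: power_mult_distrib)
  qed
  ultimately show ?thesis unfolding primitive_root_def by blast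
qed

lemma primitive_root_exists:
  "n > 0 \<Longrightarrow> \<exists>z::'a::{alg_closed_field,field_char_0}. primitive_root n z"
proof (induction n rule: less_induct)
  case (less n)
  show ?case
  proof (cases "n = 1")
    case True
    then show ?thesis by (auto simp: primitive_root_def intro!: exI[of _ 1])
  next
    case False
    obtain p where p: "prime p" "p dvd n" using prime_factor_nat[OF False] by blast
    define a where "a = multiplicity p n"
    have "n \<noteq> 0" "\<not> is_unit p" using less.prems p(1) by (auto simp: not_prime_unit)
    then obtain y where y: "n = p ^ a * y" "\<not> p dvd y"
      unfolding a_def by (rule multiplicity_decompose')
    have "a \<ge> 1" using p(2) y by (cases a) auto
    then have "p ^ a \<ge> 2"
      using power_increasing[of 1 a p] prime_ge_2_nat[OF p(1)] by simp
    moreover have y0: "y > 0" using y(1) less.prems by (cases "y = 0") auto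
    ultimately have "y < n" using y(1) by simp
    then obtain z1 :: 'a where z1: "primitive_root y z1" using less.IH y0 by blast
    obtain z2 :: 'a where z2: "primitive_root (p ^ a) z2"
      using primitive_root_prime_power_exists[OF p(1) \<open>a \<ge> 1\<close>] by blast
    have "coprime (p ^ a) y" using prime_imp_coprime[OF p(1) y(2)] by simp
    then show ?thesis using primitive_root_mult[OF z2 z1] y(1) by auto
  qed
qed

lemma primitive_root_nonzero: "primitive_root n z \<Longrightarrow> n > 0 \<Longrightarrow> z \<noteq> (0::'a::field)"
  using primitive_root_power_eq_1_iff[of n z n] by (auto simp: zero_power)

lemma primitive_root_power_eq_iff:
  fixes z :: "'a::field"
  assumes z: "primitive_root n z" and n: "n > 0"
  shows "z ^ i = z ^ j \<longleftrightarrow> i mod n = j mod n"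
proof -
  have *: "z ^ i = z ^ j \<longleftrightarrow> i mod n = j mod n" if ij: "i \<le> j" for i j
  proof -
    have "z ^ j = z ^ i * z ^ (j - i)" using ij by (simp add: power_add[symmetric])
    then have "z ^ i = z ^ j \<longleftrightarrow> z ^ (j - i) = 1"
      using primitive_root_nonzero[OF z n] by auto
    also have "\<dots> \<longleftrightarrow> j mod n = i mod n"
      using primitive_root_power_eq_1_iff[OF z] mod_eq_dvd_iff_nat[OF ij] by simp
    finally show ?thesis by auto
  qed
  show ?thesis using *[of i j] *[of j i] by (cases "i \<le> j") auto
qed

lemma primitive_root_generates_roots:
  fixes z :: "'a::field"
  assumes z: "primitive_root n z" and n: "n > 0" and x: "x ^ n = 1"
  shows "\<exists>j<n. x = z ^ j"
proof -
  define P :: "'a poly" where "P = monom 1 n - [:1:]"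
  have "degree P = n" unfolding P_def by (rule degree_monom_minus_const[OF n])
  then have P: "P \<noteq> 0" "degree P = n" using n by auto
  have roots: "{x. poly P x = 0} = {x. x ^ n = 1}" unfolding P_def by (simp add: poly_monom)
  define S where "S = (\<lambda>j. z ^ j) ` {..<n}"
  have "inj_on (\<lambda>j. z ^ j) {..<n}"
    unfolding inj_on_def using primitive_root_power_eq_iff[OF z n] by auto
  then have "card S = n" unfolding S_def by (simp add: card_image)
  \<comment> \<open>The \<open>n\<close> distinct powers of \<open>z\<close> exhaust the at most \<open>n\<close> roots of \<open>X ^ n - 1\<close>.\<close>
  moreover have "(z ^ j) ^ n = 1" for j
    using primitive_root_power_eq_1_iff[OF z, of n] by (metis dvd_refl power_mult mult.commute power_one)
  then have "S \<subseteq> {x. poly P x = 0}" unfolding S_def roots by auto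
  moreover have "finite {x. poly P x = 0}" "card {x. poly P x = 0} \<le> n"
    using poly_roots_finite[OF P(1)] card_poly_roots_bound[OF P(1)] P(2) by auto
  ultimately have "S = {x. poly P x = 0}" by (metis card_seteq)
  then show ?thesis using x unfolding S_def roots by auto
qed

section \<open>Nondegenerate sums of radicals\<close>

lemma sum_roots_of_unity_average:
  fixes \<eta> \<alpha> :: "'i \<Rightarrow> 'a::field_char_0"
  assumes "finite A" "n > 0" and roots: "\<And>i. i \<in> A \<Longrightarrow> \<eta> i ^ n = 1"
    and sums: "\<And>k. (\<Sum>i\<in>A. \<eta> i ^ k * \<alpha> i) = 1"
  shows "(\<Sum>i | i \<in> A \<and> \<eta> i = 1. \<alpha> i) = 1"
proof -
  have "(of_nat n :: 'a) = (\<Sum>k<n. \<Sum>i\<in>A. \<eta> i ^ k * \<alpha> i)" using sums by simp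
  also have "\<dots> = (\<Sum>i\<in>A. (\<Sum>k<n. \<eta> i ^ k) * \<alpha> i)"
    by (subst sum.swap) (simp add: sum_distrib_right)
  also have "\<dots> = (\<Sum>i\<in>A. if \<eta> i = 1 then of_nat n * \<alpha> i else 0)"
    by (rule sum.cong) (auto simp: roots sum_gp_strict)
  also have "\<dots> = of_nat n * (\<Sum>i | i \<in> A \<and> \<eta> i = 1. \<alpha> i)"
  proof -
    have "{i. i \<in> A \<and> \<eta> i = 1} = A \<inter> {i. \<eta> i = 1}" by auto
    then show ?thesis using \<open>finite A\<close> by (simp add: sum.If_cases sum_distrib_left)
  qed
  finally show ?thesis using \<open>n > 0\<close> by (metis mult_cancel_left1 of_nat_eq_0_iff not_gr0)
qed

lemma nondegenerate_subsum_eq_1: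
  fixes \<alpha> :: "nat \<Rightarrow> 'a::field"
  assumes sum1: "(\<Sum>i\<in>{1..s}. \<alpha> i) = 1"
    and nondeg: "\<forall>I. I \<noteq> {} \<and> I \<subset> {1..s} \<longrightarrow> (\<Sum>i\<in>I. \<alpha> i) \<noteq> 0"
    and I: "I \<subseteq> {1..s}" "(\<Sum>i\<in>I. \<alpha> i) = 1"
  shows "I = {1..s}"
proof (rule ccontr)
  assume "I \<noteq> {1..s}"
  then have "{1..s} - I \<noteq> {}" using I(1) by auto
  moreover have "I \<noteq> {}" using I(2) by auto
  then have "{1..s} - I \<subset> {1..s}" using I(1) by auto
  moreover have "(\<Sum>i\<in>{1..s} - I. \<alpha> i) = 0" using sum_diff[of "{1..s}" I \<alpha>] I sum1 by simp
  ultimately show False using nondeg[rule_format, of "{1..s} - I"] by simp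
qed

lemma ring_hom_on_twisted_sum_eq_1:
  assumes L: "is_subfield L" and t: "ring_hom_on L t"
    and \<eta>: "\<And>i k. i \<in> A \<Longrightarrow> \<eta> i ^ k \<in> L" "\<And>i k. i \<in> A \<Longrightarrow> t (\<eta> i ^ k) = \<eta> i ^ k"
    and \<alpha>: "\<And>i. i \<in> A \<Longrightarrow> \<alpha> i \<in> L" and twist: "\<And>i. i \<in> A \<Longrightarrow> t (\<alpha> i) = \<eta> i * \<alpha> i"
    and sum1: "(\<Sum>i\<in>A. \<alpha> i) = 1"
  shows "(\<Sum>i\<in>A. \<eta> i ^ k * \<alpha> i) = 1"
proof (induction k)
  case (Suc k)
  have "t (\<eta> i ^ k * \<alpha> i) = \<eta> i ^ Suc k * \<alpha> i" if i: "i \<in> A" for i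
    using ring_hom_on_mult[OF L t \<eta>(1)[OF i] \<alpha>[OF i]] \<eta>(2)[OF i] twist[OF i] by simp
  moreover have "\<eta> i ^ k * \<alpha> i \<in> L" if "i \<in> A" for i
    using is_subring_mult[OF is_subring_if_subfield[OF L] \<eta>(1) \<alpha>] that by blast
  ultimately have "t (\<Sum>i\<in>A. \<eta> i ^ k * \<alpha> i) = (\<Sum>i\<in>A. \<eta> i ^ Suc k * \<alpha> i)"
    using ring_hom_on_sum[OF L t, of A "\<lambda>i. \<eta> i ^ k * \<alpha> i"] by simp
  then show ?case using Suc ring_hom_on_1[OF L t] by simp
qed (use sum1 in simp)

lemma nondegenerate_radical_sum_mem:
  fixes M :: "'a::{alg_closed_field,field_char_0} set" and \<alpha> :: "nat \<Rightarrow> 'a"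
  assumes M: "is_subfield M" and alg: "algebraic_over M" and n: "n > 0"
    and roots: "\<And>\<eta>. \<eta> ^ n = 1 \<Longrightarrow> \<eta> \<in> M"
    and rad: "\<And>i. i \<in> {1..s} \<Longrightarrow> \<alpha> i \<noteq> 0 \<and> \<alpha> i ^ n \<in> M"
    and sum1: "(\<Sum>i\<in>{1..s}. \<alpha> i) = 1"
    and nondeg: "\<forall>I. I \<noteq> {} \<and> I \<subset> {1..s} \<longrightarrow> (\<Sum>i\<in>I. \<alpha> i) \<noteq> 0"
    and j: "j \<in> {1..s}"
  shows "\<alpha> j \<in> M"
proof (rule ccontr)
  assume "\<alpha> j \<notin> M"
  define gs where "gs = map \<alpha> [1..<Suc s]"
  have gs: "set gs = \<alpha> ` {1..s}" unfolding gs_def by (simp only: set_map set_upt atLeastLessThanSuc_atLeastAtMost)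
  define L where "L = adjoin_list M (\<alpha> j # gs)"
  obtain t where t: "ring_hom_on L t" "\<forall>y\<in>M. t y = y" "t (\<alpha> j) \<noteq> \<alpha> j"
    unfolding L_def using exists_ring_hom_moving[OF M alg \<open>\<alpha> j \<notin> M\<close>] by blast
  have L: "is_subfield L" "M \<subseteq> L" and \<alpha>L: "\<And>i. i \<in> {1..s} \<Longrightarrow> \<alpha> i \<in> L"
    using adjoin_list_subfield[OF M alg, of "\<alpha> j # gs"] unfolding L_def by (auto simp: gs)
  define \<eta> where "\<eta> i = t (\<alpha> i) / \<alpha> i" for i
  have t\<alpha>: "t (\<alpha> i) = \<eta> i * \<alpha> i" if "i \<in> {1..s}" for i using rad[OF that] \<eta>_def by simp
  have \<eta>n: "\<eta> i ^ n = 1" if i: "i \<in> {1..s}" for i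
  proof -
    have "t (\<alpha> i) ^ n = \<alpha> i ^ n"
      using ring_hom_on_power[OF L(1) t(1) \<alpha>L[OF i], of n] t(2) rad[OF i] by simp
    then show ?thesis using rad[OF i] by (simp add: \<eta>_def power_divide)
  qed
  have \<eta>M: "\<eta> i ^ k \<in> M" if "i \<in> {1..s}" for i k
    using roots[of "\<eta> i ^ k"] \<eta>n[OF that] by (metis power_mult mult.commute power_one)
  have sums: "(\<Sum>i\<in>{1..s}. \<eta> i ^ k * \<alpha> i) = 1" for k
    using ring_hom_on_twisted_sum_eq_1[OF L(1) t(1) _ _ \<alpha>L t\<alpha> sum1] \<eta>M L(2) t(2) by blast
  have "{i. i \<in> {1..s} \<and> \<eta> i = 1} = {1..s}"
  proof (rule nondegenerate_subsum_eq_1[OF sum1 nondeg])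
    show "(\<Sum>i | i \<in> {1..s} \<and> \<eta> i = 1. \<alpha> i) = 1"
      by (rule sum_roots_of_unity_average[OF _ n \<eta>n sums]) simp_all
  qed blast
  then have "\<eta> j = 1" using j by blast
  then show False using t(3) t\<alpha>[OF j] by simp
qed

section \<open>Kummer theory over a cyclotomic extension\<close>

lemma int_ideal_has_positive_generator:
  fixes J :: "int set"
  assumes "n \<in> J" "n > 0" and closed: "\<And>a b q. a \<in> J \<Longrightarrow> b \<in> J \<Longrightarrow> a - q * b \<in> J"
  shows "\<exists>d>0. d \<in> J \<and> (\<forall>j\<in>J. d dvd j)"
proof -
  define d where "d = (LEAST d::nat. d > 0 \<and> int d \<in> J)"
  have "\<exists>d::nat. d > 0 \<and> int d \<in> J" using assms by (intro exI[of _ "nat n"]) auto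
  then have d: "d > 0" "int d \<in> J" unfolding d_def by (metis (mono_tags, lifting) LeastI_ex)+
  have "int d dvd j" if j: "j \<in> J" for j
  proof (rule ccontr)
    assume "\<not> int d dvd j"
    moreover have "0 \<le> j mod int d" "j mod int d < int d" using d(1) by simp_all
    ultimately have "nat (j mod int d) > 0" "nat (j mod int d) < d"
      by (auto simp: dvd_eq_mod_eq_0)
    moreover have "int (nat (j mod int d)) \<in> J"
      using closed[OF j d(2), of "j div int d"] d(1) by (simp add: minus_div_mult_eq_mod)
    ultimately show False using not_less_Least[of "nat (j mod int d)"] unfolding d_def by blast
  qed
  then show ?thesis using d by (intro exI[of _ "int d"]) auto
qed

text \<open>The arithmetic core of the Kummer argument: \<open>k t\<close> and \<open>c t\<close> are the exponents with
  \<open>t \<zeta> = \<zeta> ^ k t\<close> and \<open>t \<alpha> = \<zeta> ^ c t * \<alpha>\<close>, and \<open>fixed\<close> says that a power \<open>\<zeta> ^ m\<close> fixed by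
  all \<open>t\<close> lies in \<open>K\<close> and is therefore killed by \<open>w\<close>.\<close>

lemma kummer_congruence:
  fixes n w :: int and k c :: "'t \<Rightarrow> int"
  assumes n: "n > 0"
    and cocycle: "\<And>t r. t \<in> T \<Longrightarrow> r \<in> T \<Longrightarrow> n dvd c r * (k t - 1) - c t * (k r - 1)"
    and fixed: "\<And>m. m > 0 \<Longrightarrow> (\<forall>t\<in>T. n dvd m * (k t - 1)) \<Longrightarrow> n dvd m * w"
  shows "\<exists>e. \<forall>t\<in>T. n dvd w * c t - e * (k t - 1)"
proof -
  define J where "J = {j. \<exists>e. \<forall>t\<in>T. n dvd j * c t - e * (k t - 1)}"
  have nJ: "n \<in> J" unfolding J_def by (auto intro!: exI[of _ 0])
  have closed: "a - q * b \<in> J" if ab: "a \<in> J" "b \<in> J" for a b q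
  proof -
    obtain ea eb where "\<forall>t\<in>T. n dvd a * c t - ea * (k t - 1)" "\<forall>t\<in>T. n dvd b * c t - eb * (k t - 1)"
      using ab unfolding J_def by blast
    moreover have "(a - q * b) * c t - (ea - q * eb) * (k t - 1)
        = (a * c t - ea * (k t - 1)) - q * (b * c t - eb * (k t - 1))" for t
      by (simp add: algebra_simps)
    ultimately have "\<forall>t\<in>T. n dvd (a - q * b) * c t - (ea - q * eb) * (k t - 1)"
      by (metis dvd_diff dvd_mult)
    then show ?thesis unfolding J_def by blast
  qed
  have kJ: "k r - 1 \<in> J" if "r \<in> T" for r
  proof -
    have "n dvd (k r - 1) * c t - c r * (k t - 1)" if "t \<in> T" for t
      using cocycle[OF that \<open>r \<in> T\<close>] by (simp add: dvd_diff_commute mult.commute)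
    then show ?thesis unfolding J_def by blast
  qed
  obtain d where d: "d > 0" "d \<in> J" "\<And>j. j \<in> J \<Longrightarrow> d dvd j"
    using int_ideal_has_positive_generator[OF nJ n closed] by blast
  obtain m where nm: "n = d * m" using d(3)[OF nJ] by (elim dvdE)
  then have "m > 0" using n d(1) by (simp add: zero_less_mult_iff)
  moreover have "n dvd m * (k t - 1)" if "t \<in> T" for t
    using d(3)[OF kJ[OF that]] nm by (auto simp: mult.commute elim!: dvdE)
  ultimately have "d * m dvd w * m" using fixed nm by (simp add: mult.commute)
  then have "d dvd w" using \<open>m > 0\<close> by simp
  then obtain q where "w = - q * d" by (metis dvdE minus_minus mult.commute mult_minus_left)
  then have "w \<in> J" using closed[OF closed[OF nJ nJ, of 1] d(2), of q] by simp
  then show ?thesis unfolding J_def by blast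
qed

locale cyclotomic_extension =
  fixes K :: "'a::{alg_closed_field,field_char_0} set" and \<zeta> :: 'a and n :: nat
  assumes subfield: "is_subfield K" and algebraic: "algebraic_over K"
    and primitive: "primitive_root n \<zeta>" and n_pos: "n > 0"
begin

abbreviation L where "L \<equiv> adjoin K \<zeta>"

definition K_hom :: "('a \<Rightarrow> 'a) \<Rightarrow> bool" where
  "K_hom t \<longleftrightarrow> ring_hom_on L t \<and> (\<forall>x\<in>K. t x = x)"

lemma subfield_L: "is_subfield L"
  using is_subfield_adjoin[OF subfield algebraic] .

lemma subring_L: "is_subring L"
  using is_subring_if_subfield[OF subfield_L] .

lemma K_subset_L: "K \<subseteq> L"
  using subset_adjoin[OF is_subring_if_subfield[OF subfield]] .

lemma zeta_mem_L: "\<zeta> \<in> L"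
  using mem_adjoin_self[OF is_subring_if_subfield[OF subfield]] .

lemma zeta_power_mem_L: "\<zeta> ^ m \<in> L"
  using is_subring_power[OF subring_L zeta_mem_L] .

lemma zeta_power_eq_iff: "\<zeta> ^ i = \<zeta> ^ j \<longleftrightarrow> int n dvd int i - int j"
  unfolding primitive_root_power_eq_iff[OF primitive n_pos]
  by (metis mod_eq_dvd_iff of_nat_eq_iff of_nat_mod)

lemma zeta_power_n: "(\<zeta> ^ m) ^ n = 1"
  using primitive_root_power_eq_1_iff[OF primitive, of "m * n"] by (simp add: power_mult)

lemma K_hom_ring_hom_on: "K_hom t \<Longrightarrow> ring_hom_on L t"
  and K_hom_fixes: "K_hom t \<Longrightarrow> x \<in> K \<Longrightarrow> t x = x"
  unfolding K_hom_def by blast+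

lemma K_hom_power: "K_hom t \<Longrightarrow> x \<in> L \<Longrightarrow> t (x ^ k) = t x ^ k"
  using ring_hom_on_power[OF subfield_L K_hom_ring_hom_on] by blast

lemma K_hom_mult: "K_hom t \<Longrightarrow> x \<in> L \<Longrightarrow> y \<in> L \<Longrightarrow> t (x * y) = t x * t y"
  using ring_hom_on_mult[OF subfield_L K_hom_ring_hom_on] by blast

lemma K_hom_poly:
  assumes t: "K_hom t" and g: "poly_over K g"
  shows "t (poly g \<zeta>) = poly g (t \<zeta>)"
proof -
  have "map_poly t g = g"
    using g K_hom_fixes[OF t] ring_hom_on_0[OF subfield_L K_hom_ring_hom_on[OF t]]
    by (intro poly_eqI) (auto simp: coeff_map_poly poly_over_def)
  then show ?thesis
    using ring_hom_on_poly[OF subfield_L K_hom_ring_hom_on[OF t]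
        poly_over_mono[OF g K_subset_L] zeta_mem_L] by simp
qed

lemma K_hom_zeta: "K_hom t \<Longrightarrow> \<exists>k. t \<zeta> = \<zeta> ^ k"
  using K_hom_power[OF _ zeta_mem_L, of t n] zeta_power_n[of 1]
    ring_hom_on_1[OF subfield_L K_hom_ring_hom_on]
    primitive_root_generates_roots[OF primitive n_pos] by (metis power_one_right)

lemma K_hom_zeta_power: "K_hom t \<Longrightarrow> t \<zeta> = \<zeta> ^ k \<Longrightarrow> t (\<zeta> ^ m) = \<zeta> ^ (k * m)"
  using K_hom_power[OF _ zeta_mem_L, of t m] by (simp add: power_mult)

lemma K_hom_image:
  assumes t: "K_hom t" and x: "x \<in> L"
  shows "t x \<in> L"
proof -
  obtain g where g: "poly_over K g" "x = poly g \<zeta>" using x unfolding adjoin_def by blast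
  obtain k where "t \<zeta> = \<zeta> ^ k" using K_hom_zeta[OF t] by blast
  then show ?thesis
    using K_hom_poly[OF t g(1)] g poly_in_subring[OF subring_L poly_over_mono[OF g(1) K_subset_L]
        zeta_power_mem_L] by simp
qed

lemma K_hom_comp:
  assumes t: "K_hom t" and r: "K_hom r"
  shows "K_hom (t \<circ> r)"
  unfolding K_hom_def ring_hom_on_def
proof (intro conjI ballI)
  note ht = K_hom_ring_hom_on[OF t] and hr = K_hom_ring_hom_on[OF r]
  show "(t \<circ> r) 1 = 1" using ring_hom_on_1[OF subfield_L hr] ring_hom_on_1[OF subfield_L ht] by simp
  fix x y assume xy: "x \<in> L" "y \<in> L"
  have rxy: "r x \<in> L" "r y \<in> L" using K_hom_image[OF r] xy by blast+
  show "(t \<circ> r) (x + y) = (t \<circ> r) x + (t \<circ> r) y"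
    using ring_hom_on_add[OF subfield_L hr xy] ring_hom_on_add[OF subfield_L ht rxy] by simp
  show "(t \<circ> r) (x * y) = (t \<circ> r) x * (t \<circ> r) y"
    using ring_hom_on_mult[OF subfield_L hr xy] ring_hom_on_mult[OF subfield_L ht rxy] by simp
next
  show "(t \<circ> r) x = x" if "x \<in> K" for x using K_hom_fixes[OF t] K_hom_fixes[OF r] that by simp
qed

lemma K_hom_commute:
  assumes t: "K_hom t" and r: "K_hom r" and x: "x \<in> L"
  shows "t (r x) = r (t x)"
proof -
  obtain g where g: "poly_over K g" "x = poly g \<zeta>" using x unfolding adjoin_def by blast
  obtain a b where a: "t \<zeta> = \<zeta> ^ a" and b: "r \<zeta> = \<zeta> ^ b" using K_hom_zeta t r by metis
  have "t (r \<zeta>) = r (t \<zeta>)"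
    using K_hom_zeta_power[OF t a, of b] K_hom_zeta_power[OF r b, of a] a b by (simp add: mult.commute)
  then show ?thesis
    using K_hom_poly[OF K_hom_comp[OF t r] g(1)] K_hom_poly[OF K_hom_comp[OF r t] g(1)] g(2) by simp
qed

lemma fixed_imp_mem:
  assumes x: "x \<in> L" and fixed: "\<And>t. K_hom t \<Longrightarrow> t x = x"
  shows "x \<in> K"
proof (rule ccontr)
  assume "x \<notin> K"
  then obtain t where t: "ring_hom_on (adjoin_list K [x, \<zeta>]) t" "\<forall>y\<in>K. t y = y" "t x \<noteq> x"
    using exists_ring_hom_moving[OF subfield algebraic] by blast
  have "L \<subseteq> adjoin_list K [x, \<zeta>]"
    using adjoin_mono[OF subset_adjoin[OF is_subring_if_subfield[OF subfield]]] by simp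
  then have "K_hom t" using t(1,2) ring_hom_on_subset unfolding K_hom_def by blast
  then show False using fixed t(3) by blast
qed

lemma K_hom_twist_exponents:
  assumes \<alpha>: "\<alpha> \<in> L" "\<alpha> \<noteq> 0" "\<alpha> ^ n \<in> K"
  obtains k c where "\<And>t. K_hom t \<Longrightarrow> t \<zeta> = \<zeta> ^ k t" "\<And>t. K_hom t \<Longrightarrow> t \<alpha> = \<zeta> ^ c t * \<alpha>"
    "\<And>t r. K_hom t \<Longrightarrow> K_hom r \<Longrightarrow> int n dvd int (c r) * (int (k t) - 1) - int (c t) * (int (k r) - 1)"
proof -
  obtain k where k: "\<And>t. K_hom t \<Longrightarrow> t \<zeta> = \<zeta> ^ k t" using K_hom_zeta by metis
  have "\<exists>c. t \<alpha> = \<zeta> ^ c * \<alpha>" if t: "K_hom t" for t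
  proof -
    have "t \<alpha> ^ n = \<alpha> ^ n" using K_hom_power[OF t \<alpha>(1), of n] K_hom_fixes[OF t \<alpha>(3)] by simp
    then have "(t \<alpha> / \<alpha>) ^ n = 1" using \<alpha>(2) by (simp add: power_divide)
    then obtain c where "t \<alpha> / \<alpha> = \<zeta> ^ c" using primitive_root_generates_roots[OF primitive n_pos] by blast
    then show ?thesis using \<alpha>(2) by (auto simp: field_simps)
  qed
  then obtain c where c: "\<And>t. K_hom t \<Longrightarrow> t \<alpha> = \<zeta> ^ c t * \<alpha>" by metis
  have twist: "t (r \<alpha>) = \<zeta> ^ (k t * c r + c t) * \<alpha>" if t: "K_hom t" and r: "K_hom r" for t r
    using c[OF r] K_hom_mult[OF t zeta_power_mem_L \<alpha>(1)] K_hom_zeta_power[OF t k[OF t]] c[OF t]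
    by (simp add: power_add)
  have "int n dvd int (c r) * (int (k t) - 1) - int (c t) * (int (k r) - 1)"
    if t: "K_hom t" and r: "K_hom r" for t r
  proof -
    have "\<zeta> ^ (k t * c r + c t) = \<zeta> ^ (k r * c t + c r)"
      using twist[OF t r] twist[OF r t] K_hom_commute[OF t r \<alpha>(1)] \<alpha>(2) by simp
    then show ?thesis unfolding zeta_power_eq_iff by (simp add: algebra_simps)
  qed
  with k c that show ?thesis by blast
qed

lemma fixed_zeta_power_dvd:
  assumes w: "\<And>u. u \<in> K \<Longrightarrow> u ^ n = 1 \<Longrightarrow> u ^ w = 1"
    and k: "\<And>t. K_hom t \<Longrightarrow> t \<zeta> = \<zeta> ^ k t"
    and m: "\<forall>t\<in>{t. K_hom t}. int n dvd int m * (int (k t) - 1)"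
  shows "n dvd m * w"
proof -
  have "t (\<zeta> ^ m) = \<zeta> ^ m" if t: "K_hom t" for t
  proof -
    have "\<zeta> ^ (k t * m) = \<zeta> ^ m" unfolding zeta_power_eq_iff using m t by (simp add: algebra_simps)
    then show ?thesis using K_hom_zeta_power[OF t k[OF t], of m] by simp
  qed
  then have "\<zeta> ^ m \<in> K" using fixed_imp_mem[OF zeta_power_mem_L] by blast
  then have "\<zeta> ^ (m * w) = 1" using w zeta_power_n by (simp add: power_mult)
  then show ?thesis using primitive_root_power_eq_1_iff[OF primitive] by blast
qed

lemma kummer_twist:
  assumes \<alpha>: "\<alpha> \<in> L" "\<alpha> \<noteq> 0" "\<alpha> ^ n \<in> K"
    and w: "\<And>u. u \<in> K \<Longrightarrow> u ^ n = 1 \<Longrightarrow> u ^ w = 1"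
  shows "\<exists>\<xi>. \<xi> ^ n = 1 \<and> \<alpha> ^ w * \<xi> \<in> K"
proof -
  obtain k c where k: "\<And>t. K_hom t \<Longrightarrow> t \<zeta> = \<zeta> ^ k t" and c: "\<And>t. K_hom t \<Longrightarrow> t \<alpha> = \<zeta> ^ c t * \<alpha>"
    and cocycle: "\<And>t r. K_hom t \<Longrightarrow> K_hom r \<Longrightarrow>
      int n dvd int (c r) * (int (k t) - 1) - int (c t) * (int (k r) - 1)"
    using K_hom_twist_exponents[OF \<alpha>] by blast
  have "\<exists>e. \<forall>t\<in>{t. K_hom t}. int n dvd int w * int (c t) - e * (int (k t) - 1)"
  proof (rule kummer_congruence)
    fix m :: int assume "m > 0" "\<forall>t\<in>{t. K_hom t}. int n dvd m * (int (k t) - 1)"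
    then have "n dvd nat m * w" using fixed_zeta_power_dvd[of w k "nat m"] w k by simp
    then have "int n dvd int (nat m * w)" by (simp only: int_dvd_int_iff)
    then show "int n dvd m * int w" using \<open>m > 0\<close> by simp
  qed (use n_pos cocycle in auto)
  then obtain e where e: "\<And>t. K_hom t \<Longrightarrow> int n dvd int w * int (c t) - e * (int (k t) - 1)" by blast
  define e' where "e' = nat ((- e) mod int n)"
  have e': "int n dvd int e' + e"
    using mod_eq_dvd_iff[of "(- e) mod int n" "int n" "- e"] n_pos by (simp add: e'_def)
  have "t (\<alpha> ^ w * \<zeta> ^ e') = \<alpha> ^ w * \<zeta> ^ e'" if t: "K_hom t" for t
  proof -
    have "t (\<alpha> ^ w * \<zeta> ^ e') = (\<zeta> ^ c t * \<alpha>) ^ w * \<zeta> ^ (k t * e')"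
      using K_hom_mult[OF t is_subring_power[OF subring_L \<alpha>(1)] zeta_power_mem_L]
        K_hom_power[OF t \<alpha>(1)] c[OF t] K_hom_zeta_power[OF t k[OF t]] by simp
    also have "\<dots> = \<alpha> ^ w * \<zeta> ^ (c t * w + k t * e')"
      by (simp add: power_mult_distrib power_add power_mult[symmetric] mult_ac)
    also have "\<zeta> ^ (c t * w + k t * e') = \<zeta> ^ e'"
    proof -
      have "int (c t * w + k t * e') - int e'
          = (int w * int (c t) - e * (int (k t) - 1)) + (int (k t) - 1) * (int e' + e)"
        by (simp add: algebra_simps)
      then show ?thesis unfolding zeta_power_eq_iff using e[OF t] e' by (metis dvd_add dvd_mult)
    qed
    finally show ?thesis .
  qed
  then have "\<alpha> ^ w * \<zeta> ^ e' \<in> K"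
    using fixed_imp_mem is_subring_mult[OF subring_L is_subring_power[OF subring_L \<alpha>(1)] zeta_power_mem_L]
    by blast
  then show ?thesis using zeta_power_n by blast
qed

end

section \<open>Normalizing radicals by roots of unity\<close>

lemma root_of_unity_mult:
  assumes "root_of_unity (a::'a::field)" "root_of_unity b"
  shows "root_of_unity (a * b)"
proof -
  obtain m k where mk: "m > 0" "a ^ m = 1" "k > 0" "b ^ k = 1"
    using assms unfolding root_of_unity_def by blast
  have "(a * b) ^ (m * k) = (a ^ m) ^ k * (b ^ k) ^ m"
    by (simp add: power_mult_distrib power_mult[symmetric] mult.commute)
  then show ?thesis unfolding root_of_unity_def using mk by (intro exI[of _ "m * k"]) simp
qed

lemma root_of_unity_nonzero: "root_of_unity (a::'a::field) \<Longrightarrow> a \<noteq> 0"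
  unfolding root_of_unity_def by (auto simp: zero_power)

lemma root_of_unity_power_card:
  fixes z :: "'a::field"
  assumes z: "root_of_unity z"
  shows "z ^ card {z::'a. root_of_unity z} = 1"
proof (cases "finite {z::'a. root_of_unity z}")
  case True
  define U where "U = {z::'a. root_of_unity z}"
  have inj: "inj_on ((*) z) U" using root_of_unity_nonzero[OF z] by (simp add: inj_on_def)
  moreover have "(*) z ` U \<subseteq> U" unfolding U_def using root_of_unity_mult[OF z] by auto
  ultimately have "(*) z ` U = U" using True card_image card_subset_eq unfolding U_def by metis
  then have "prod id U = prod ((*) z) U" using prod.reindex[OF inj, of id] by simp
  also have "\<dots> = z ^ card U * prod id U" by (simp add: prod.distrib)
  finally show ?thesis
    using True root_of_unity_nonzero unfolding U_def by (auto simp: prod_zero_iff)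
qed simp

lemma is_subfield_range_to_ac: "is_subfield (range (to_ac :: 'k::field \<Rightarrow> 'k alg_closure))"
  unfolding is_subfield_def
proof (intro conjI ballI)
  show "0 \<in> range (to_ac :: 'k \<Rightarrow> _)" "1 \<in> range (to_ac :: 'k \<Rightarrow> _)"
    by (metis rangeI to_ac_0, metis rangeI to_ac_1)
  fix x y assume "x \<in> range (to_ac :: 'k \<Rightarrow> _)" "y \<in> range (to_ac :: 'k \<Rightarrow> _)"
  then obtain a b where "x = to_ac a" "y = to_ac b" by blast
  then show "x + y \<in> range to_ac" "x * y \<in> range to_ac" "- x \<in> range to_ac" "inverse x \<in> range to_ac"
    by (metis rangeI to_ac_add, metis rangeI to_ac_mult, metis rangeI to_ac_minus,
        metis rangeI to_ac_inverse)
qed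

lemma algebraic_over_range_to_ac: "algebraic_over (range (to_ac :: 'k::field \<Rightarrow> 'k alg_closure))"
  unfolding algebraic_over_def
proof
  fix y :: "'k alg_closure"
  obtain p :: "'k poly" where p: "p \<noteq> 0" "poly (map_poly to_ac p) y = 0" by (rule alg_closure_algebraic)
  moreover have "map_poly to_ac p \<noteq> 0" using p(1) by (simp add: map_poly_eq_0_iff)
  moreover have "poly_over (range to_ac) (map_poly to_ac p)" by (simp add: poly_over_def coeff_map_poly)
  ultimately show "\<exists>q. q \<noteq> 0 \<and> poly_over (range to_ac) q \<and> poly q y = 0" by blast
qed

lemma common_radical_exponent:
  assumes "finite A" "is_subring K" and rad: "\<forall>i\<in>A. \<exists>n>0. x i ^ n \<in> K"
  shows "\<exists>N>0. \<forall>i\<in>A. x i ^ N \<in> K"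
proof -
  obtain n where n: "\<And>i. i \<in> A \<Longrightarrow> n i > 0 \<and> x i ^ n i \<in> K" using rad by metis
  have "x i ^ prod n A \<in> K" if "i \<in> A" for i
    using dvd_prodI[OF \<open>finite A\<close> that, of n] is_subring_power[OF \<open>is_subring K\<close>] n[OF that]
    by (auto simp: power_mult elim!: dvdE)
  moreover have "prod n A > 0" using n by (simp add: prod_pos)
  ultimately show ?thesis by blast
qed

theorem nondegenerate_radical_sum_power_mem:
  fixes K :: "'a::{alg_closed_field,field_char_0} set" and \<alpha> :: "nat \<Rightarrow> 'a"
  assumes K: "is_subfield K" "algebraic_over K"
    and w: "\<And>u. u \<in> K \<Longrightarrow> root_of_unity u \<Longrightarrow> u ^ w = 1"
    and rad: "\<forall>i\<in>{1..s}. \<alpha> i \<noteq> 0 \<and> (\<exists>n>0. \<alpha> i ^ n \<in> K)"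
    and sum1: "(\<Sum>i\<in>{1..s}. \<alpha> i) = 1"
    and nondeg: "\<forall>I. I \<noteq> {} \<and> I \<subset> {1..s} \<longrightarrow> (\<Sum>i\<in>I. \<alpha> i) \<noteq> 0"
  shows "\<exists>\<xi>. \<forall>i\<in>{1..s}. root_of_unity (\<xi> i) \<and> \<alpha> i ^ w * \<xi> i \<in> K"
proof -
  obtain N where N: "N > 0" "\<And>i. i \<in> {1..s} \<Longrightarrow> \<alpha> i ^ N \<in> K"
    using common_radical_exponent[of "{1..s}" K \<alpha>] rad is_subring_if_subfield[OF K(1)] by auto
  obtain \<zeta> :: 'a where \<zeta>: "primitive_root N \<zeta>" using primitive_root_exists[OF N(1)] by blast
  interpret cyclotomic_extension K \<zeta> N using K \<zeta> N(1) by unfold_locales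
  have "\<eta> \<in> L" if "\<eta> ^ N = 1" for \<eta>
    using primitive_root_generates_roots[OF \<zeta> N(1) that] zeta_power_mem_L by blast
  then have "\<alpha> i \<in> L" if "i \<in> {1..s}" for i
    using nondegenerate_radical_sum_mem[OF subfield_L algebraic_over_mono[OF K(2) K_subset_L] N(1)
        _ _ sum1 nondeg that] rad N(2) K_subset_L by blast
  then have "\<exists>\<xi>. root_of_unity \<xi> \<and> \<alpha> i ^ w * \<xi> \<in> K" if "i \<in> {1..s}" for i
    using kummer_twist[of "\<alpha> i" w] rad N that w unfolding root_of_unity_def by blast
  then show ?thesis by metis
qed

theorem corollary1p4:
  fixes \<alpha> :: "nat \<Rightarrow> 'k::field_char_0 alg_closure" and s :: nat
  assumes fg: "finitely_generated_field TYPE('k)"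
    and Gamma: "\<forall>i\<in>{1..s}. \<alpha> i \<in>
       {x :: 'k alg_closure. x \<noteq> 0 \<and> (\<exists>n::nat. n > 0 \<and> x ^ n \<in> to_ac ` (UNIV - {0}))}"
    and sum1: "(\<Sum>i\<in>{1..s}. \<alpha> i) = 1"
    and nondeg: "\<forall>I. I \<noteq> {} \<and> I \<subset> {1..s} \<longrightarrow> (\<Sum>i\<in>I. \<alpha> i) \<noteq> 0"
  shows "\<exists>\<xi> :: nat \<Rightarrow> 'k alg_closure. \<forall>i\<in>{1..s}.
           \<xi> i \<noteq> 0 \<and> root_of_unity (\<xi> i) \<and>
           \<alpha> i ^ card {z :: 'k. root_of_unity z} * \<xi> i \<in> range to_ac"
proof -
  have to_ac_power_eq_1: "to_ac v ^ n = 1 \<longleftrightarrow> v ^ n = 1" for v :: 'k and n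
    by (metis to_ac_1 to_ac_eq_iff to_ac_power)
  have w: "u ^ card {z :: 'k. root_of_unity z} = 1" if u: "u \<in> range to_ac" "root_of_unity u"
    for u :: "'k alg_closure"
  proof -
    obtain v where v: "u = to_ac v" using u(1) by blast
    have "root_of_unity v" using u(2) unfolding v root_of_unity_def to_ac_power_eq_1 by simp
    then show ?thesis unfolding v to_ac_power_eq_1 by (rule root_of_unity_power_card)
  qed
  have rad: "\<forall>i\<in>{1..s}. \<alpha> i \<noteq> 0 \<and> (\<exists>n>0. \<alpha> i ^ n \<in> range to_ac)"
  proof
    fix i assume "i \<in> {1..s}"
    then obtain n where "\<alpha> i \<noteq> 0" "n > 0" "\<alpha> i ^ n \<in> to_ac ` (UNIV - {0})" using Gamma by blast
    then show "\<alpha> i \<noteq> 0 \<and> (\<exists>n>0. \<alpha> i ^ n \<in> range to_ac)" by blast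
  qed
  obtain \<xi> where "\<forall>i\<in>{1..s}. root_of_unity (\<xi> i) \<and>
      \<alpha> i ^ card {z :: 'k. root_of_unity z} * \<xi> i \<in> range to_ac"
    using nondegenerate_radical_sum_power_mem[OF is_subfield_range_to_ac algebraic_over_range_to_ac w rad
        sum1 nondeg] by blast
  then show ?thesis by (intro exI[of _ \<xi>]) (simp add: root_of_unity_nonzero)
qed

end
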